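(* Let $\mathcal G$ be a $\Gamma$-periodic graph with fundamental graph $\mathcal G_*=(\mathcal V_*,\mathcal A_* )=\mathcal G/\Gamma$, where $\Gamma$ has rank $d$, and let $\beta$ be the Betti number of $\mathcal G_*$. Then: (i) there exists a basis $\{\mathbf c_1,\dots,\mathbf c_\beta\}$ of the cycle space $\mathcal C$ of $\mathcal G_*$ such that $\tau(\mathbf c_1),\dots,\tau(\mathbf c_d)$ form the standard orthonormal basis of $\mathbb Z^d$, and $\{\mathbf c_{d+1},\dots,\mathbf c_\beta\}$ is a basis of the subspace $\mathcal C^0$ of all cycles of $\mathcal G_*$ with zero index; (ii) $\{\mathbf c_1,\dots,\mathbf c_\beta\}\cup\{\mathbf e_x\}_{x\in\mathcal V_*}$ is a basis of the cycle space $\widetilde{\mathcal C}$ of the modified fundamental graph $\widetilde{\mathcal G}_*=(\mathcal V_*,\mathcal A_*\cup\{\mathbf e_x\}_{x\in\mathcal V_*})$, where $\mathbf e_x$ is a loop at the vertex $x$.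
   Context: Let $\Gamma\subset\mathbb R^d$ be a lattice with basis $\mathfrak a_1,\dots,\mathfrak a_d$ and fundamental cell $\Omega=\{\sum_sx_s\mathfrak a_s:(x_s)\in[0,1)^d\}$. A $\Gamma$-periodic graph $\mathcal G=(\mathcal V,\mathcal E)$ is a connected, locally finite, infinite graph embedded in $\mathbb R^d$ (loops and multiple edges allowed), invariant under translations by $\Gamma$, whose quotient $\mathcal G_*=(\mathcal V_*,\mathcal E_* )$ is finite; $\beta=\#\mathcal E_*-\#\mathcal V_*+1$. Oriented edges: $\mathcal A_*$. Edge index: write $x=x_0+[x]$ with $x_0\in\mathcal V\cap\Omega$, $[x]\in\Gamma$ with coordinates $[x]_{\mathbb A}\in\mathbb Z^d$; for $(x,y)\in\mathcal A$, $\tau((x,y))=[y]_{\mathbb A}-[x]_{\mathbb A}$, which is $\Gamma$-invariant and thus defined on $\mathcal A_*$, with $\tau$ of the reversed edge equal to $-\tau$. The cycle space $\mathcal C$ of a graph is its integer cycle space (first homology group with $\mathbb Z$ coefficients, a free abelian group of rank equal to the Betti number), generated by closed cycles (sequences of oriented edges forming a closed walk); the index $\tau(\mathbf c)=\sum_{\mathbf e\in\mathbf c}\tau(\mathbf e)$ extends additively to a homomorphism $\mathcal C\to\mathbb Z^d$. In $\widetilde{\mathcal G}_*$ the added loops satisfy $\tau(\mathbf e_x)=0$. *)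

theory Defs
  imports "HOL-Analysis.Analysis"
begin

text \<open>
  Fundamental (quotient) graph G_* : finite vertex set V, finite edge set E
  (multiple edges and loops allowed), each edge e carrying a fixed orientation
  from src e to tgt e; the reversed oriented edge has index - tau e.
  Integer chains are functions E -> int (coefficient of the positively oriented edge).
\<close>

definition chains :: "'e set \<Rightarrow> ('e \<Rightarrow> int) set" where
  "chains E = {c. \<forall>e. e \<notin> E \<longrightarrow> c e = 0}"

definition cycle_space ::
  "'v set \<Rightarrow> 'e set \<Rightarrow> ('e \<Rightarrow> 'v) \<Rightarrow> ('e \<Rightarrow> 'v) \<Rightarrow> ('e \<Rightarrow> int) set" where
  "cycle_space V E src tgt =
     {c \<in> chains E. \<forall>v\<in>V. (\<Sum>e\<in>{e\<in>E. tgt e = v}. c e) = (\<Sum>e\<in>{e\<in>E. src e = v}. c e)}"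

definition chain_index :: "'e set \<Rightarrow> ('e \<Rightarrow> int^'d) \<Rightarrow> ('e \<Rightarrow> int) \<Rightarrow> int^'d" where
  "chain_index E \<tau> c = (\<Sum>e\<in>E. c e *s \<tau> e)"

definition zero_index_cycles ::
  "'v set \<Rightarrow> 'e set \<Rightarrow> ('e \<Rightarrow> 'v) \<Rightarrow> ('e \<Rightarrow> 'v) \<Rightarrow> ('e \<Rightarrow> int^'d) \<Rightarrow> ('e \<Rightarrow> int) set" where
  "zero_index_cycles V E src tgt \<tau> = {c \<in> cycle_space V E src tgt. chain_index E \<tau> c = 0}"

definition Z_basis :: "('e \<Rightarrow> int) set \<Rightarrow> ('i \<Rightarrow> 'e \<Rightarrow> int) \<Rightarrow> 'i set \<Rightarrow> bool" where
  "Z_basis S b I \<longleftrightarrow> finite I \<and> b ` I \<subseteq> S \<and>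
     (\<forall>c\<in>S. \<exists>!a. (\<forall>i. i \<notin> I \<longrightarrow> a i = 0) \<and> c = (\<lambda>e. \<Sum>i\<in>I. a i * b i e))"

text \<open>The Gamma-periodic graph G, written in the coordinates x = x_0 + [x] with
  x_0 \<in> V (vertices in the fundamental cell) and [x]_A \<in> Z^d: its vertex set is
  V \<times> Z^d, and every edge e of G_* from u to v lifts to the edges
  (u,n) -- (v, n + tau e), n \<in> Z^d.\<close>
definition periodic_adj ::
  "'v set \<Rightarrow> 'e set \<Rightarrow> ('e \<Rightarrow> 'v) \<Rightarrow> ('e \<Rightarrow> 'v) \<Rightarrow> ('e \<Rightarrow> int^'d)
   \<Rightarrow> ('v \<times> (int^'d)) \<Rightarrow> ('v \<times> (int^'d)) \<Rightarrow> bool" where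
  "periodic_adj V E src tgt \<tau> x y \<longleftrightarrow> fst x \<in> V \<and> fst y \<in> V \<and>
     (\<exists>e\<in>E. (src e = fst x \<and> tgt e = fst y \<and> snd y = snd x + \<tau> e) \<or>
            (src e = fst y \<and> tgt e = fst x \<and> snd x = snd y + \<tau> e))"

definition periodic_graph_connected ::
  "'v set \<Rightarrow> 'e set \<Rightarrow> ('e \<Rightarrow> 'v) \<Rightarrow> ('e \<Rightarrow> 'v) \<Rightarrow> ('e \<Rightarrow> int^'d) \<Rightarrow> bool" where
  "periodic_graph_connected V E src tgt \<tau> \<longleftrightarrow>
     (\<forall>x y. fst x \<in> V \<longrightarrow> fst y \<in> V \<longrightarrow> (periodic_adj V E src tgt \<tau>)\<^sup>*\<^sup>* x y)"

definition betti :: "'v set \<Rightarrow> 'e set \<Rightarrow> int" where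
  "betti V E = int (card E) - int (card V) + 1"

definition mod_edges :: "'v set \<Rightarrow> 'e set \<Rightarrow> ('e + 'v) set" where
  "mod_edges V E = Inl ` E \<union> Inr ` V"

definition mod_src :: "('e \<Rightarrow> 'v) \<Rightarrow> ('e + 'v) \<Rightarrow> 'v" where
  "mod_src src e' = (case e' of Inl e \<Rightarrow> src e | Inr x \<Rightarrow> x)"

definition mod_tgt :: "('e \<Rightarrow> 'v) \<Rightarrow> ('e + 'v) \<Rightarrow> 'v" where
  "mod_tgt tgt e' = (case e' of Inl e \<Rightarrow> tgt e | Inr x \<Rightarrow> x)"

definition lift_chain :: "('e \<Rightarrow> int) \<Rightarrow> ('e + 'v) \<Rightarrow> int" where
  "lift_chain c e' = (case e' of Inl e \<Rightarrow> c e | Inr _ \<Rightarrow> 0)"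

definition loop_chain :: "'v \<Rightarrow> ('e + 'v) \<Rightarrow> int" where
  "loop_chain x e' = (if e' = Inr x then 1 else 0)"

end

theory Submission
  imports Defs
begin

text \<open>
  Over \<open>\<int>\<close>, the kernel of an additive map from a free group of rank \<open>n\<close> onto \<open>\<int>\<^sup>m\<close> is
  free of rank \<open>n - m\<close>, and together with any preimages of the unit vectors it gives a basis
  of the whole group. One functional at a time, this follows from Euclid's algorithm run on a
  basis by elementary changes, until the functional vanishes on all basis vectors but one.
  Connectedness of the periodic graph makes the relevant maps onto: a walk from \<open>(v\<^sub>0, 0)\<close> to
  \<open>(w, n)\<close> projects to a chain of the fundamental graph with boundary \<open>w - v\<^sub>0\<close> and index \<open>n\<close>.
  Applied to the boundary map on the chains (with values in the sum-zero vectors of \<open>\<int>\<^sup>V\<close>),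
  this gives the rank \<open>\<beta>\<close> of the cycle space; applied to the index map on the cycles,
  it gives part (i). For part (ii), the loops \<open>e\<^sub>x\<close> are cycles with coordinates disjoint from
  those of the old edges.
\<close>

section \<open>Bases of free abelian groups of integer functions\<close>

definition lincomb :: "('i \<Rightarrow> int) \<Rightarrow> ('i \<Rightarrow> 'e \<Rightarrow> int) \<Rightarrow> 'i set \<Rightarrow> 'e \<Rightarrow> int" where
  "lincomb a b I = (\<lambda>e. \<Sum>i\<in>I. a i * b i e)"

definition int_span :: "('i \<Rightarrow> 'e \<Rightarrow> int) \<Rightarrow> 'i set \<Rightarrow> ('e \<Rightarrow> int) set" where
  "int_span b I = range (\<lambda>a. lincomb a b I)"

definition int_independent :: "('i \<Rightarrow> 'e \<Rightarrow> int) \<Rightarrow> 'i set \<Rightarrow> bool" where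
  "int_independent b I \<longleftrightarrow> (\<forall>a. lincomb a b I = (\<lambda>e. 0) \<longrightarrow> (\<forall>i\<in>I. a i = 0))"

definition int_basis :: "('e \<Rightarrow> int) set \<Rightarrow> ('i \<Rightarrow> 'e \<Rightarrow> int) \<Rightarrow> 'i set \<Rightarrow> bool" where
  "int_basis S b I \<longleftrightarrow> finite I \<and> S = int_span b I \<and> int_independent b I"

lemma lincomb_cong:
  "(\<And>i. i \<in> I \<Longrightarrow> a i = a' i) \<Longrightarrow> (\<And>i. i \<in> I \<Longrightarrow> b i = b' i) \<Longrightarrow>
    lincomb a b I = lincomb a' b' I"
  unfolding lincomb_def by simp

lemma lincomb_unit:
  "finite I \<Longrightarrow> i \<in> I \<Longrightarrow> lincomb (\<lambda>j. if j = i then 1 else 0) b I = b i"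
proof
  fix e assume "finite I" "i \<in> I"
  then show "lincomb (\<lambda>j. if j = i then 1 else 0) b I e = b i e"
    unfolding lincomb_def by (simp add: mult_delta_left)
qed

lemma lincomb_diff: "lincomb (\<lambda>i. a i - a' i) b I = (\<lambda>e. lincomb a b I e - lincomb a' b I e)"
  unfolding lincomb_def by (simp add: left_diff_distrib sum_subtractf)

lemma lincomb_restrict:
  "finite I \<Longrightarrow> K \<subseteq> I \<Longrightarrow> lincomb (\<lambda>i. if i \<in> K then a i else 0) b I = lincomb a b K"
  unfolding lincomb_def by (simp add: mult_delta_left sum.inter_restrict[symmetric] Int_absorb1 Int_commute)

lemma lincomb_lincomb:
  "lincomb a (\<lambda>j. lincomb (c j) b I) J = lincomb (\<lambda>i. \<Sum>j\<in>J. a j * c j i) b I"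
  unfolding lincomb_def
  by (simp add: sum_distrib_left sum_distrib_right sum.swap[of _ J] mult.assoc)

lemma lincomb_Plus:
  "finite J \<Longrightarrow> finite K \<Longrightarrow>
    lincomb a (case_sum x y) (J <+> K) = (\<lambda>e. lincomb (a \<circ> Inl) x J e + lincomb (a \<circ> Inr) y K e)"
  unfolding lincomb_def by (simp add: sum.Plus comp_def)

lemma lincomb_reindex:
  assumes "bij_betw h I' I"
  shows "lincomb (a \<circ> h) (b \<circ> h) I' = lincomb a b I"
proof
  fix e show "lincomb (a \<circ> h) (b \<circ> h) I' e = lincomb a b I e"
    using sum.reindex_bij_betw[OF assms, of "\<lambda>i. a i * b i e"] by (simp add: lincomb_def)
qed

lemma lincomb_add_multiple:
  assumes "finite I" "i \<in> I" "j \<in> I" "i \<noteq> j"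
  shows "lincomb a (b(i := \<lambda>e. b i e + k * b j e)) I = lincomb (a(j := a j + k * a i)) b I"
proof
  fix e
  have "lincomb a (b(i := \<lambda>e. b i e + k * b j e)) I e
      = (\<Sum>l\<in>I. a l * b l e + (if l = i then a i * k * b j e else 0))"
    unfolding lincomb_def by (intro sum.cong) (auto simp: algebra_simps)
  also have "\<dots> = (\<Sum>l\<in>I. a l * b l e + (if l = j then k * a i * b j e else 0))"
    using assms by (simp add: sum.distrib)
  also have "\<dots> = lincomb (a(j := a j + k * a i)) b I e"
    unfolding lincomb_def using assms by (intro sum.cong) (auto simp: algebra_simps)
  finally show "lincomb a (b(i := \<lambda>e. b i e + k * b j e)) I e = lincomb (a(j := a j + k * a i)) b I e" .
qed

lemma int_span_lincomb: "lincomb a b I \<in> int_span b I"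
  unfolding int_span_def by blast

lemma int_span_member: "finite I \<Longrightarrow> i \<in> I \<Longrightarrow> b i \<in> int_span b I"
  by (metis int_span_lincomb lincomb_unit)

lemma int_span_diff:
  "y \<in> int_span b I \<Longrightarrow> z \<in> int_span b I \<Longrightarrow> (\<lambda>e. y e - z e) \<in> int_span b I"
  unfolding int_span_def by (auto simp flip: lincomb_diff)

lemma int_span_lincomb_closed:
  assumes "\<And>j. j \<in> J \<Longrightarrow> y j \<in> int_span b I"
  shows "lincomb c y J \<in> int_span b I"
proof -
  have "\<forall>j\<in>J. \<exists>a. y j = lincomb a b I"
    using assms unfolding int_span_def by blast
  then obtain \<alpha> where "\<And>j. j \<in> J \<Longrightarrow> y j = lincomb (\<alpha> j) b I"
    by metis
  then have "lincomb c y J = lincomb c (\<lambda>j. lincomb (\<alpha> j) b I) J"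
    by (intro lincomb_cong) auto
  then show ?thesis
    by (simp add: lincomb_lincomb int_span_lincomb)
qed

lemma int_basis_imp_Z_basis:
  assumes "int_basis S b I"
  shows "Z_basis S b I"
proof -
  have fin: "finite I" and S: "S = int_span b I" and indep: "int_independent b I"
    using assms by (auto simp: int_basis_def)
  have unique: "\<exists>!a. (\<forall>i. i \<notin> I \<longrightarrow> a i = 0) \<and> c = lincomb a b I" if c: "c \<in> S" for c
  proof (rule ex_ex1I)
    obtain a where "c = lincomb a b I"
      using c S unfolding int_span_def by blast
    also have "\<dots> = lincomb (\<lambda>i. if i \<in> I then a i else 0) b I"
      by (rule lincomb_cong) simp_all
    finally show "\<exists>a. (\<forall>i. i \<notin> I \<longrightarrow> a i = 0) \<and> c = lincomb a b I"
      by (intro exI[of _ "\<lambda>i. if i \<in> I then a i else 0"]) simp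
  next
    fix a a'
    assume a: "(\<forall>i. i \<notin> I \<longrightarrow> a i = 0) \<and> c = lincomb a b I"
      and a': "(\<forall>i. i \<notin> I \<longrightarrow> a' i = 0) \<and> c = lincomb a' b I"
    then have "lincomb (\<lambda>i. a i - a' i) b I = (\<lambda>e. 0)"
      by (simp add: lincomb_diff)
    then have "\<forall>i\<in>I. a i - a' i = 0"
      using indep unfolding int_independent_def by blast
    then show "a = a'"
      using a a' by fastforce
  qed
  show ?thesis
    unfolding Z_basis_def
  proof (intro conjI ballI)
    show "b ` I \<subseteq> S"
      using int_span_member[OF fin] by (auto simp: S)
    show "\<exists>!a. (\<forall>i. i \<notin> I \<longrightarrow> a i = 0) \<and> c = (\<lambda>e. \<Sum>i\<in>I. a i * b i e)" if "c \<in> S" for c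
      using unique[OF that] by (simp only: lincomb_def)
  qed (rule fin)
qed

lemma int_basis_reindex:
  assumes h: "bij_betw h I' I" and B: "int_basis S b I"
  shows "int_basis S (b \<circ> h) I'"
proof -
  let ?g = "inv_into I' h"
  have g: "bij_betw ?g I I'"
    using h by (rule bij_betw_inv_into)
  have pullback: "lincomb a (b \<circ> h) I' = lincomb (a \<circ> ?g) b I" for a
  proof -
    have "lincomb a (b \<circ> h) I' = lincomb (a \<circ> ?g) ((b \<circ> h) \<circ> ?g) I"
      by (rule lincomb_reindex[OF g, symmetric])
    also have "\<dots> = lincomb (a \<circ> ?g) b I"
      using bij_betw_inv_into_right[OF h] by (intro lincomb_cong) auto
    finally show ?thesis .
  qed
  have "int_span (b \<circ> h) I' \<subseteq> int_span b I"
    using pullback by (auto simp: int_span_def)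
  moreover have "lincomb a b I \<in> int_span (b \<circ> h) I'" for a
    using lincomb_reindex[OF h, of a b] int_span_lincomb by metis
  then have "int_span b I \<subseteq> int_span (b \<circ> h) I'"
    by (auto simp: int_span_def)
  ultimately have "int_span (b \<circ> h) I' = int_span b I"
    by blast
  moreover have "int_independent (b \<circ> h) I'"
    unfolding int_independent_def
  proof (intro allI impI ballI)
    fix a i assume "lincomb a (b \<circ> h) I' = (\<lambda>e. 0)" and i: "i \<in> I'"
    then have "lincomb (a \<circ> ?g) b I = (\<lambda>e. 0)"
      by (simp add: pullback)
    then have zero: "\<forall>i\<in>I. (a \<circ> ?g) i = 0"
      using B unfolding int_basis_def int_independent_def by blast
    have "a (?g (h i)) = 0"
      using zero bij_betw_apply[OF h i] by simp
    then show "a i = 0"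
      using bij_betw_inv_into_left[OF h i] by simp
  qed
  moreover have "finite I'"
    using B bij_betw_finite[OF h] by (simp add: int_basis_def)
  ultimately show ?thesis
    using B by (simp add: int_basis_def)
qed

lemma int_basis_lessThan:
  assumes "int_basis S b I"
  obtains b' where "int_basis S b' {..<card I}"
proof -
  obtain h where "bij_betw h {..<card I} I"
    using assms ex_bij_betw_nat_finite unfolding int_basis_def lessThan_atLeast0 by blast
  then show thesis
    using that int_basis_reindex assms by blast
qed

lemma int_basis_add_multiple:
  assumes B: "int_basis S b I" and ij: "i \<in> I" "j \<in> I" "i \<noteq> j"
  shows "int_basis S (b(i := \<lambda>e. b i e + k * b j e)) I"
proof -
  have fin: "finite I"
    using B int_basis_def by blast
  have span_sub: "int_span (c(i := \<lambda>e. c i e + m * c j e)) I \<subseteq> int_span c I" for c m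
  proof
    fix y assume "y \<in> int_span (c(i := \<lambda>e. c i e + m * c j e)) I"
    then obtain a where "y = lincomb a (c(i := \<lambda>e. c i e + m * c j e)) I"
      unfolding int_span_def by blast
    then show "y \<in> int_span c I"
      by (simp add: lincomb_add_multiple[OF fin ij] int_span_lincomb)
  qed
  let ?b = "b(i := \<lambda>e. b i e + k * b j e)"
  have "b = ?b(i := \<lambda>e. ?b i e + (- k) * ?b j e)"
    using ij by (simp add: fun_eq_iff)
  then have "int_span b I \<subseteq> int_span ?b I"
    using span_sub[of ?b "- k"] by simp
  then have "int_span ?b I = int_span b I"
    by (rule subset_antisym[OF span_sub])
  moreover have "int_independent ?b I"
    unfolding int_independent_def
  proof (intro allI impI)
    fix a assume "lincomb a ?b I = (\<lambda>e. 0)"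
    then have "lincomb (a(j := a j + k * a i)) b I = (\<lambda>e. 0)"
      by (simp add: lincomb_add_multiple[OF fin ij])
    then have zero: "\<forall>l\<in>I. (a(j := a j + k * a i)) l = 0"
      using B unfolding int_basis_def int_independent_def by blast
    then have "a i = 0"
      using ij by (metis fun_upd_other)
    show "\<forall>l\<in>I. a l = 0"
    proof
      fix l assume "l \<in> I"
      then show "a l = 0"
        using zero \<open>a i = 0\<close> by (cases "l = j") auto
    qed
  qed
  ultimately show ?thesis
    using B by (simp add: int_basis_def)
qed

section \<open>Kernels of additive functionals\<close>

definition additive_functional :: "(('e \<Rightarrow> int) \<Rightarrow> int) \<Rightarrow> bool" where
  "additive_functional f \<longleftrightarrow> (\<forall>x y. f (\<lambda>e. x e + y e) = f x + f y)"

lemma additive_functionalD: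
  assumes "additive_functional f"
  shows "f (\<lambda>e. x e + y e) = f x + f y"
  using assms unfolding additive_functional_def by (rule spec2)

lemma additive_functional_zero:
  assumes f: "additive_functional f"
  shows "f (\<lambda>e. 0) = 0"
proof -
  have "f (\<lambda>e. 0) = f (\<lambda>e. 0) + f (\<lambda>e. 0)"
    using additive_functionalD[OF f, of "\<lambda>e. 0" "\<lambda>e. 0"] by (simp only: add_0)
  then show ?thesis
    by linarith
qed

lemma additive_functional_scale:
  assumes f: "additive_functional f"
  shows "f (\<lambda>e. k * x e) = k * f x"
proof (induction k rule: int_induct[where k = 0])
  case base
  then show ?case
    using additive_functional_zero[OF f] by simp
next
  case (step1 i)
  have "f (\<lambda>e. (i + 1) * x e) = f (\<lambda>e. i * x e + x e)"
    by (simp add: algebra_simps)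
  also have "\<dots> = i * f x + f x"
    by (simp only: additive_functionalD[OF f] step1)
  finally show ?case
    by (simp add: algebra_simps)
next
  case (step2 i)
  have "i * f x = f (\<lambda>e. (i - 1) * x e + x e)"
    using step2 by (simp add: algebra_simps)
  also have "\<dots> = f (\<lambda>e. (i - 1) * x e) + f x"
    by (rule additive_functionalD[OF f])
  finally show ?case
    by (simp add: algebra_simps)
qed

lemma additive_functional_diff:
  assumes f: "additive_functional f"
  shows "f (\<lambda>e. x e - y e) = f x - f y"
  using additive_functionalD[OF f, of x "\<lambda>e. (- 1) * y e"] additive_functional_scale[OF f, of "- 1" y]
  by simp

lemma additive_functional_lincomb:
  assumes f: "additive_functional f"
  shows "f (lincomb a b I) = (\<Sum>i\<in>I. a i * f (b i))"
proof (induction I rule: infinite_finite_induct)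
  case (infinite I)
  then show ?case
    by (simp add: lincomb_def additive_functional_zero[OF f])
next
  case empty
  then show ?case
    by (simp add: lincomb_def additive_functional_zero[OF f])
next
  case (insert i I)
  then have "f (lincomb a b (insert i I)) = f (\<lambda>e. a i * b i e + lincomb a b I e)"
    by (simp add: lincomb_def)
  also have "\<dots> = a i * f (b i) + f (lincomb a b I)"
    by (simp only: additive_functionalD[OF f] additive_functional_scale[OF f])
  finally show ?case
    using insert by simp
qed

lemma int_basis_subfamily:
  assumes B: "int_basis S b I" and K: "K \<subseteq> I"
  shows "int_basis (int_span b K) b K"
proof -
  have fin: "finite I"
    using B int_basis_def by blast
  have "int_independent b K"
    unfolding int_independent_def
  proof (intro allI impI ballI)
    fix a i assume "lincomb a b K = (\<lambda>e. 0)" and i: "i \<in> K"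
    then have "lincomb (\<lambda>i. if i \<in> K then a i else 0) b I = (\<lambda>e. 0)"
      by (simp add: lincomb_restrict[OF fin K])
    then have "\<forall>i\<in>I. (if i \<in> K then a i else 0) = 0"
      using B unfolding int_basis_def int_independent_def by blast
    then have "(if i \<in> K then a i else 0) = 0"
      using i K by blast
    then show "a i = 0"
      using i by simp
  qed
  then show ?thesis
    using finite_subset[OF K fin] by (simp add: int_basis_def)
qed

lemma int_basis_concentrate_functional:
  assumes "int_basis S b I" and "I \<noteq> {}" and f: "additive_functional f"
  shows "\<exists>b' i0. int_basis S b' I \<and> i0 \<in> I \<and> (\<forall>i\<in>I - {i0}. f (b' i) = 0)"
  using assms(1)
proof (induction "\<Sum>i\<in>I. nat \<bar>f (b i)\<bar>" arbitrary: b rule: less_induct)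
  case less
  have fin: "finite I"
    using less.prems int_basis_def by blast
  show ?case
  proof (cases "\<exists>i\<in>I. \<exists>j\<in>I. i \<noteq> j \<and> f (b i) \<noteq> 0 \<and> f (b j) \<noteq> 0")
    case True
    \<comment> \<open>Euclid step: subtracting \<open>\<plusminus>b j\<close> from \<open>b i\<close> lowers \<open>\<bar>f (b i)\<bar>\<close>
      by \<open>\<bar>f (b j)\<bar>\<close>.\<close>
    then obtain i j where ij: "i \<in> I" "j \<in> I" "i \<noteq> j" "f (b j) \<noteq> 0" "\<bar>f (b j)\<bar> \<le> \<bar>f (b i)\<bar>"
      by (metis linear)
    define s where "s = sgn (f (b i)) * sgn (f (b j))"
    define b' where "b' = b(i := \<lambda>e. b i e + (- s) * b j e)"
    have B': "int_basis S b' I"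
      unfolding b'_def using less.prems ij(1-3) by (rule int_basis_add_multiple)
    have "f (b' i) = f (b i) - s * f (b j)"
      using additive_functionalD[OF f, of "b i" "\<lambda>e. (- s) * b j e"]
        additive_functional_scale[OF f, of "- s" "b j"]
      by (simp add: b'_def)
    also have "\<bar>\<dots>\<bar> = \<bar>f (b i)\<bar> - \<bar>f (b j)\<bar>"
      using ij(4,5) unfolding s_def by (cases "f (b i) > 0"; cases "f (b j) > 0") (auto simp: sgn_if)
    finally have "nat \<bar>f (b' i)\<bar> < nat \<bar>f (b i)\<bar>"
      using ij(4) by simp
    moreover have "nat \<bar>f (b' k)\<bar> \<le> nat \<bar>f (b k)\<bar>" for k
    proof (cases "k = i")
      case True
      then show ?thesis
        using \<open>nat \<bar>f (b' i)\<bar> < nat \<bar>f (b i)\<bar>\<close> by (simp add: less_imp_le)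
    next
      case False
      then show ?thesis
        by (simp add: b'_def)
    qed
    ultimately have "(\<Sum>k\<in>I. nat \<bar>f (b' k)\<bar>) < (\<Sum>k\<in>I. nat \<bar>f (b k)\<bar>)"
      using fin ij(1) by (intro sum_strict_mono_ex1) auto
    then show ?thesis
      using less.hyps B' by blast
  next
    case False
    obtain i0 where "i0 \<in> I" "\<forall>i\<in>I - {i0}. f (b i) = 0"
    proof (cases "\<exists>i0\<in>I. f (b i0) \<noteq> 0")
      case True
      then show thesis
        using False that by blast
    next
      case False
      then show thesis
        using \<open>I \<noteq> {}\<close> that by blast
    qed
    then show ?thesis
      using less.prems by blast
  qed
qed

lemma int_basis_kernel_functional:
  assumes B: "int_basis S b I" and f: "additive_functional f" and x: "x \<in> S" "f x \<noteq> 0"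
  shows "card I \<noteq> 0 \<and> (\<exists>b'. int_basis {y \<in> S. f y = 0} b' {..<card I - 1})"
proof -
  have fin: "finite I" and S: "S = int_span b I"
    using B int_basis_def by auto
  obtain ax where ax: "x = lincomb ax b I"
    using x(1) S unfolding int_span_def by blast
  have "I \<noteq> {}"
    using x(2) additive_functional_lincomb[OF f, of ax b] by (auto simp: ax)
  then obtain b' i0 where B': "int_basis S b' I" and i0: "i0 \<in> I"
    and vanish: "\<forall>i\<in>I - {i0}. f (b' i) = 0"
    using int_basis_concentrate_functional[OF B _ f] by blast
  have S': "S = int_span b' I"
    using B' int_basis_def by blast
  have f_lincomb: "f (lincomb a b' I) = a i0 * f (b' i0)" for a
    using additive_functional_lincomb[OF f, of a b' I] fin i0 vanish by (simp add: sum.remove)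
  have "f (b' i0) \<noteq> 0"
    using x S' f_lincomb unfolding int_span_def by auto
  let ?K = "I - {i0}"
  have K: "?K \<subseteq> I"
    by blast
  have restrict: "lincomb (\<lambda>i. if i \<in> ?K then a i else 0) b' I = lincomb a b' ?K" for a
    using lincomb_restrict[OF fin K] .
  have "{y \<in> S. f y = 0} = int_span b' ?K"
  proof
    show "{y \<in> S. f y = 0} \<subseteq> int_span b' ?K"
    proof
      fix y assume y: "y \<in> {y \<in> S. f y = 0}"
      then obtain a where a: "y = lincomb a b' I"
        using S' unfolding int_span_def by blast
      then have "a i0 = 0"
        using y f_lincomb \<open>f (b' i0) \<noteq> 0\<close> by simp
      then have "y = lincomb (\<lambda>i. if i \<in> ?K then a i else 0) b' I"
        unfolding a by (intro lincomb_cong) auto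
      then show "y \<in> int_span b' ?K"
        using int_span_lincomb[of a b' ?K] by (simp only: restrict)
    qed
    show "int_span b' ?K \<subseteq> {y \<in> S. f y = 0}"
    proof
      fix y assume "y \<in> int_span b' ?K"
      then obtain a where "y = lincomb (\<lambda>i. if i \<in> ?K then a i else 0) b' I"
        unfolding int_span_def restrict[symmetric] by blast
      then show "y \<in> {y \<in> S. f y = 0}"
        using f_lincomb by (simp add: S' int_span_lincomb)
    qed
  qed
  then have "int_basis {y \<in> S. f y = 0} b' ?K"
    using int_basis_subfamily[OF B' K] by simp
  then obtain b'' where "int_basis {y \<in> S. f y = 0} b'' {..<card ?K}"
    by (rule int_basis_lessThan)
  then show ?thesis
    using fin i0 by auto
qed

lemma int_basis_kernel:
  assumes B: "int_basis S b I" and "finite J"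
    and "\<And>j. j \<in> J \<Longrightarrow> additive_functional (L j)"
    and "\<And>j. j \<in> J \<Longrightarrow> \<exists>x\<in>S. \<forall>j'\<in>J. L j' x = (if j' = j then 1 else 0)"
  shows "card J \<le> card I \<and> (\<exists>b'. int_basis {x \<in> S. \<forall>j\<in>J. L j x = 0} b' {..<card I - card J})"
  using assms(2-4)
proof (induction J rule: finite_induct)
  \<comment> \<open>The section of \<open>j0\<close> lies in the kernel of the other functionals,
    so they split off one by one.\<close>
  case empty
  then show ?case
    using int_basis_lessThan[OF B] by auto
next
  case (insert j0 J)
  let ?T = "{x \<in> S. \<forall>j\<in>J. L j x = 0}"
  have "\<exists>x\<in>S. \<forall>j'\<in>J. L j' x = (if j' = j then 1 else 0)" if "j \<in> J" for j
    using insert.prems(2) that by blast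
  then obtain b' where le: "card J \<le> card I" and T: "int_basis ?T b' {..<card I - card J}"
    using insert.IH insert.prems(1) by blast
  obtain x where x: "x \<in> S" "\<forall>j'\<in>insert j0 J. L j' x = (if j' = j0 then 1 else 0)"
    using insert.prems(2) by blast
  then have "x \<in> ?T" "L j0 x \<noteq> 0"
    using insert.hyps(2) by auto
  then have "card I - card J \<noteq> 0 \<and>
      (\<exists>b''. int_basis {y \<in> ?T. L j0 y = 0} b'' {..<card I - card J - 1})"
    using int_basis_kernel_functional[OF T insert.prems(1)[OF insertI1]] by simp
  moreover have "{y \<in> ?T. L j0 y = 0} = {x \<in> S. \<forall>j\<in>insert j0 J. L j x = 0}"
    by auto
  ultimately show ?case
    using le insert.hyps by (simp add: diff_diff_left)
qed

lemma int_basis_split: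
  assumes B: "int_basis S b I" and "finite J"
    and L: "\<And>j. j \<in> J \<Longrightarrow> additive_functional (L j)"
    and x: "\<And>j. j \<in> J \<Longrightarrow> x j \<in> S"
    and dual: "\<And>j j'. j \<in> J \<Longrightarrow> j' \<in> J \<Longrightarrow> L j' (x j) = (if j' = j then 1 else 0)"
    and K: "int_basis {y \<in> S. \<forall>j\<in>J. L j y = 0} k K"
  shows "int_basis S (case_sum x k) (J <+> K)"
proof -
  let ?T = "{y \<in> S. \<forall>j\<in>J. L j y = 0}"
  have fin: "finite (J <+> K)"
    using \<open>finite J\<close> K by (simp add: int_basis_def)
  have S: "S = int_span b I"
    using B int_basis_def by blast
  have T: "?T = int_span k K" and "finite K"
    using K unfolding int_basis_def by blast+
  have k: "k i \<in> ?T" if "i \<in> K" for i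
    using int_span_member[OF \<open>finite K\<close> that] T by simp
  have family: "case_sum x k m \<in> S" if "m \<in> J <+> K" for m
    using that x k by auto
  have coordinate: "L j' (lincomb a (case_sum x k) (J <+> K)) = a (Inl j')" if "j' \<in> J" for a j'
  proof -
    have "L j' (lincomb a (case_sum x k) (J <+> K)) = (\<Sum>m\<in>J <+> K. a m * L j' (case_sum x k m))"
      by (rule additive_functional_lincomb[OF L[OF that]])
    also have "\<dots> = (\<Sum>j\<in>J. a (Inl j) * L j' (x j)) + (\<Sum>i\<in>K. a (Inr i) * L j' (k i))"
      using \<open>finite J\<close> \<open>finite K\<close> by (simp add: sum.Plus comp_def)
    also have "\<dots> = a (Inl j')"
      using dual[OF _ that] k that \<open>finite J\<close> by (simp add: mult_delta_right cong: sum.cong)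
    finally show ?thesis .
  qed
  have "int_span (case_sum x k) (J <+> K) \<subseteq> S"
  proof
    fix y assume "y \<in> int_span (case_sum x k) (J <+> K)"
    then obtain a where "y = lincomb a (case_sum x k) (J <+> K)"
      unfolding int_span_def by blast
    then show "y \<in> S"
      using family int_span_lincomb_closed[of "J <+> K" "case_sum x k" b I a] by (simp add: S)
  qed
  moreover have "S \<subseteq> int_span (case_sum x k) (J <+> K)"
  proof
    fix s assume s: "s \<in> S"
    let ?t = "\<lambda>e. s e - lincomb (\<lambda>j. L j s) x J e"
    have "?t \<in> S"
      using s x by (simp add: S int_span_diff int_span_lincomb_closed)
    moreover have "L j' ?t = 0" if "j' \<in> J" for j'
    proof -
      have "L j' ?t = L j' s - (\<Sum>j\<in>J. L j s * L j' (x j))"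
        using additive_functional_diff[OF L[OF that]] additive_functional_lincomb[OF L[OF that]] by simp
      also have "\<dots> = 0"
        using dual[OF _ that] that \<open>finite J\<close> by (simp add: mult_delta_right cong: sum.cong)
      finally show ?thesis .
    qed
    ultimately obtain c where "?t = lincomb c k K"
      using T unfolding int_span_def by blast
    then have "s = lincomb (case_sum (\<lambda>j. L j s) c) (case_sum x k) (J <+> K)"
      using \<open>finite J\<close> \<open>finite K\<close> by (simp add: lincomb_Plus case_sum_o_inj fun_eq_iff algebra_simps)
    then show "s \<in> int_span (case_sum x k) (J <+> K)"
      using int_span_lincomb by metis
  qed
  moreover have "int_independent (case_sum x k) (J <+> K)"
    unfolding int_independent_def
  proof (intro allI impI)
    fix a assume zero: "lincomb a (case_sum x k) (J <+> K) = (\<lambda>e. 0)"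
    then have Inl: "a (Inl j) = 0" if "j \<in> J" for j
      using coordinate[OF that, of a] additive_functional_zero[OF L[OF that]] by simp
    have "lincomb (a \<circ> Inl) x J = lincomb (\<lambda>_. 0) x J"
      by (rule lincomb_cong) (simp_all add: Inl)
    then have "lincomb (a \<circ> Inl) x J = (\<lambda>e. 0)"
      by (simp add: lincomb_def)
    then have "lincomb (a \<circ> Inr) k K = (\<lambda>e. 0)"
      using zero by (simp add: lincomb_Plus[OF \<open>finite J\<close> \<open>finite K\<close>] fun_eq_iff)
    then have "a (Inr i) = 0" if "i \<in> K" for i
      using K that unfolding int_basis_def int_independent_def by auto
    then show "\<forall>m\<in>J <+> K. a m = 0"
      using Inl by auto
  qed
  ultimately show ?thesis
    using fin by (simp add: int_basis_def)
qed

section \<open>Chains and cycles of the fundamental graph\<close>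

definition boundary :: "'e set \<Rightarrow> ('e \<Rightarrow> 'v) \<Rightarrow> ('e \<Rightarrow> 'v) \<Rightarrow> ('e \<Rightarrow> int) \<Rightarrow> 'v \<Rightarrow> int" where
  "boundary E src tgt x v = (\<Sum>e\<in>{e\<in>E. tgt e = v}. x e) - (\<Sum>e\<in>{e\<in>E. src e = v}. x e)"

definition unit_chain :: "'e \<Rightarrow> 'e \<Rightarrow> int" where
  "unit_chain e = (\<lambda>e'. if e' = e then 1 else 0)"

lemma cycle_space_iff_boundary:
  "x \<in> cycle_space V E src tgt \<longleftrightarrow> x \<in> chains E \<and> (\<forall>v\<in>V. boundary E src tgt x v = 0)"
  unfolding cycle_space_def boundary_def by auto

lemma additive_functional_boundary: "additive_functional (\<lambda>x. boundary E src tgt x v)"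
  unfolding additive_functional_def boundary_def by (simp add: sum.distrib)

lemma chain_index_component: "chain_index E \<tau> x $ i = (\<Sum>e\<in>E. x e * \<tau> e $ i)"
  unfolding chain_index_def by simp

lemma additive_functional_chain_index: "additive_functional (\<lambda>x. chain_index E \<tau> x $ i)"
  unfolding additive_functional_def chain_index_component by (simp add: distrib_right sum.distrib)

lemma boundary_unit_chain:
  "finite E \<Longrightarrow> e \<in> E \<Longrightarrow>
    boundary E src tgt (unit_chain e) v = (if tgt e = v then 1 else 0) - (if src e = v then 1 else 0)"
  unfolding boundary_def unit_chain_def by (simp add: sum.delta')

lemma chain_index_unit_chain: "finite E \<Longrightarrow> e \<in> E \<Longrightarrow> chain_index E \<tau> (unit_chain e) = \<tau> e"
  unfolding vec_eq_iff chain_index_component unit_chain_def by (simp add: mult_delta_left sum.delta')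

lemma chains_int_basis: "finite E \<Longrightarrow> int_basis (chains E) unit_chain E"
proof -
  assume fin: "finite E"
  have lincomb_unit_chain: "lincomb a unit_chain E e = (if e \<in> E then a e else 0)" for a e
    unfolding lincomb_def unit_chain_def using fin by (simp add: mult_delta_right sum.delta')
  have "chains E = int_span unit_chain E"
  proof
    show "chains E \<subseteq> int_span unit_chain E"
    proof
      fix x assume "x \<in> chains E"
      then have "x = lincomb x unit_chain E"
        by (auto simp: lincomb_unit_chain chains_def)
      then show "x \<in> int_span unit_chain E"
        by (metis int_span_lincomb)
    qed
    show "int_span unit_chain E \<subseteq> chains E"
      by (auto simp: int_span_def chains_def lincomb_unit_chain)
  qed
  moreover have "int_independent unit_chain E"
    unfolding int_independent_def by (metis lincomb_unit_chain)
  ultimately show ?thesis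
    using fin by (simp add: int_basis_def)
qed

lemma sum_boundary_eq_0:
  assumes "finite V" "finite E" "\<forall>e\<in>E. src e \<in> V \<and> tgt e \<in> V"
  shows "(\<Sum>v\<in>V. boundary E src tgt x v) = 0"
proof -
  have "(\<Sum>v\<in>V. \<Sum>e\<in>{e\<in>E. h e = v}. x e) = (\<Sum>e\<in>E. x e)" if "\<forall>e\<in>E. h e \<in> V" for h
    using assms(1,2) that by (intro sum.group) auto
  then show ?thesis
    unfolding boundary_def using assms(3) by (simp add: sum_subtractf)
qed

lemma cycle_space_eq_kernel:
  assumes "finite V" "finite E" "\<forall>e\<in>E. src e \<in> V \<and> tgt e \<in> V" and v0: "v0 \<in> V"
  shows "cycle_space V E src tgt = {x \<in> chains E. \<forall>v\<in>V - {v0}. boundary E src tgt x v = 0}"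
proof -
  have "boundary E src tgt x v0 = 0" if "\<forall>v\<in>V - {v0}. boundary E src tgt x v = 0" for x
    using sum_boundary_eq_0[OF assms(1-3), of x] that assms(1) v0 by (simp add: sum.remove)
  then show ?thesis
    unfolding set_eq_iff cycle_space_iff_boundary by blast
qed

lemma chain_of_walk:
  assumes "finite E" and "(periodic_adj V E src tgt \<tau>)\<^sup>*\<^sup>* p q"
  shows "\<exists>c\<in>chains E.
    (\<forall>v. boundary E src tgt c v = (if v = fst q then 1 else 0) - (if v = fst p then 1 else 0))
    \<and> chain_index E \<tau> c = snd q - snd p"
  using assms(2)
proof (induction rule: rtranclp_induct)
  case base
  have "(\<lambda>e. 0) \<in> chains E"
    by (simp add: chains_def)
  then show ?case
    by (intro bexI[of _ "\<lambda>e. 0"]) (simp_all add: boundary_def vec_eq_iff chain_index_component)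
next
  case (step y z)
  then obtain c where c: "c \<in> chains E"
    "\<forall>v. boundary E src tgt c v = (if v = fst y then 1 else 0) - (if v = fst p then 1 else 0)"
    "chain_index E \<tau> c = snd y - snd p"
    by blast
  \<comment> \<open>\<open>\<sigma> = \<plusminus>1\<close> records whether the step traverses a lift of \<open>e\<close> along or against
    its orientation.\<close>
  obtain e and \<sigma> :: int where e: "e \<in> E"
    and \<sigma>: "\<sigma> = 1 \<and> src e = fst y \<and> tgt e = fst z \<and> snd z = snd y + \<tau> e
      \<or> \<sigma> = - 1 \<and> src e = fst z \<and> tgt e = fst y \<and> snd y = snd z + \<tau> e"
    using step.hyps(2) unfolding periodic_adj_def by blast
  have step_boundary: "\<sigma> * boundary E src tgt (unit_chain e) v
      = (if v = fst z then 1 else 0) - (if v = fst y then 1 else 0)" for v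
    using \<sigma> by (auto simp: boundary_unit_chain[OF assms(1) e])
  have step_index: "\<sigma> *s chain_index E \<tau> (unit_chain e) = snd z - snd y"
    using \<sigma> by (auto simp: chain_index_unit_chain[OF assms(1) e] vec_eq_iff)
  let ?c = "\<lambda>e'. c e' + \<sigma> * unit_chain e e'"
  have "?c \<in> chains E"
    using c(1) e by (simp add: chains_def unit_chain_def)
  moreover have "boundary E src tgt ?c v = boundary E src tgt c v + \<sigma> * boundary E src tgt (unit_chain e) v" for v
    using additive_functionalD[OF additive_functional_boundary[of E src tgt v], of c "\<lambda>e'. \<sigma> * unit_chain e e'"]
      additive_functional_scale[OF additive_functional_boundary[of E src tgt v], of \<sigma> "unit_chain e"] by simp
  moreover have "chain_index E \<tau> ?c = chain_index E \<tau> c + \<sigma> *s chain_index E \<tau> (unit_chain e)"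
    unfolding vec_eq_iff by (simp add: chain_index_component algebra_simps sum.distrib sum_distrib_left)
  ultimately show ?case
    using c step_boundary step_index by (intro bexI[of _ ?c]) simp_all
qed

lemma cycle_space_int_basis:
  assumes fin: "finite V" "finite E" and ends: "\<forall>e\<in>E. src e \<in> V \<and> tgt e \<in> V"
    and v0: "v0 \<in> V" and conn: "periodic_graph_connected V E src tgt \<tau>"
  shows "card V \<le> card E + 1 \<and> (\<exists>b. int_basis (cycle_space V E src tgt) b {..<card E + 1 - card V})"
proof -
  let ?L = "\<lambda>v x. boundary E src tgt x v"
  have sections: "\<exists>x\<in>chains E. \<forall>v\<in>V - {v0}. ?L v x = (if v = w then 1 else 0)"
    if w: "w \<in> V - {v0}" for w
  proof -
    have "(periodic_adj V E src tgt \<tau>)\<^sup>*\<^sup>* (v0, 0) (w, 0)"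
      using conn v0 w unfolding periodic_graph_connected_def by auto
    from chain_of_walk[OF fin(2) this] obtain c where "c \<in> chains E"
      and "\<forall>v. boundary E src tgt c v = (if v = w then 1 else 0) - (if v = v0 then 1 else 0)"
      by auto
    then show ?thesis
      using w by (intro bexI[of _ c]) auto
  qed
  have "card (V - {v0}) \<le> card E \<and>
      (\<exists>b. int_basis {x \<in> chains E. \<forall>v\<in>V - {v0}. ?L v x = 0} b {..<card E - card (V - {v0})})"
    by (rule int_basis_kernel[OF chains_int_basis[OF fin(2)]])
      (use fin(1) sections additive_functional_boundary in auto)
  moreover have "card (V - {v0}) = card V - 1" and "card V \<ge> 1"
    using fin(1) v0 by (auto simp: card_gt_0_iff Suc_le_eq)
  ultimately show ?thesis
    using cycle_space_eq_kernel[OF fin ends v0] by auto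
qed

lemma exists_cycle_with_index:
  assumes "finite E" "v0 \<in> V" "periodic_graph_connected V E src tgt \<tau>"
  shows "\<exists>c\<in>cycle_space V E src tgt. chain_index E \<tau> c = n"
proof -
  have "(periodic_adj V E src tgt \<tau>)\<^sup>*\<^sup>* (v0, 0) (v0, n)"
    using assms(2,3) unfolding periodic_graph_connected_def by auto
  from chain_of_walk[OF assms(1) this] show ?thesis
    by (auto simp: cycle_space_iff_boundary)
qed

lemma modified_cycle_space_iff:
  fixes V :: "'v set" and E :: "'e set" and y :: "'e + 'v \<Rightarrow> int"
  assumes "finite E"
  shows "y \<in> cycle_space V (mod_edges V E) (mod_src src) (mod_tgt tgt) \<longleftrightarrow>
    (\<lambda>e. y (Inl e)) \<in> cycle_space V E src tgt \<and> (\<forall>v. v \<notin> V \<longrightarrow> y (Inr v) = 0)"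
proof -
  have incident: "(\<Sum>e'\<in>{e'\<in>mod_edges V E. case_sum h (\<lambda>x. x) e' = v}. y e')
      = (\<Sum>e\<in>{e\<in>E. h e = v}. y (Inl e)) + y (Inr v)" if "v \<in> V" for h :: "'e \<Rightarrow> 'v" and v
  proof -
    have "{e'\<in>mod_edges V E. case_sum h (\<lambda>x. x) e' = v} = Inl ` {e\<in>E. h e = v} \<union> {Inr v}"
      using that by (auto simp: mod_edges_def elim: sumE)
    then show ?thesis
      using assms by (simp add: sum.union_disjoint sum.reindex image_iff)
  qed
  have "mod_src src = case_sum src (\<lambda>x. x)" "mod_tgt tgt = case_sum tgt (\<lambda>x. x)"
    by (auto simp: fun_eq_iff mod_src_def mod_tgt_def split: sum.splits)
  moreover have "y \<in> chains (mod_edges V E) \<longleftrightarrow>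
      (\<lambda>e. y (Inl e)) \<in> chains E \<and> (\<forall>v. v \<notin> V \<longrightarrow> y (Inr v) = 0)"
    by (auto simp: chains_def mod_edges_def split_sum_all)
  ultimately show ?thesis
    unfolding cycle_space_def using incident by auto
qed

lemma lincomb_modified_family:
  assumes "finite I" "finite V"
  shows "lincomb a (\<lambda>k. case k of Inl j \<Rightarrow> lift_chain (c j) | Inr x \<Rightarrow> loop_chain x) (I <+> V)
    = (\<lambda>e'. case e' of Inl e \<Rightarrow> lincomb (a \<circ> Inl) c I e | Inr v \<Rightarrow> if v \<in> V then a (Inr v) else 0)"
proof
  fix e'
  show "lincomb a (\<lambda>k. case k of Inl j \<Rightarrow> lift_chain (c j) | Inr x \<Rightarrow> loop_chain x) (I <+> V) e'
      = (case e' of Inl e \<Rightarrow> lincomb (a \<circ> Inl) c I e | Inr v \<Rightarrow> if v \<in> V then a (Inr v) else 0)"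
    unfolding lincomb_Plus[OF assms] using assms(2)
    by (cases e') (simp_all add: lincomb_def lift_chain_def loop_chain_def mult_delta_right)
qed

lemma modified_cycle_space_int_basis:
  assumes fin: "finite V" "finite E" and C: "int_basis (cycle_space V E src tgt) c I"
  shows "int_basis (cycle_space V (mod_edges V E) (mod_src src) (mod_tgt tgt))
    (\<lambda>k. case k of Inl j \<Rightarrow> lift_chain (c j) | Inr x \<Rightarrow> loop_chain x) (I <+> V)"
proof -
  let ?F = "\<lambda>k. case k of Inl j \<Rightarrow> lift_chain (c j) | Inr x \<Rightarrow> loop_chain x"
  let ?C = "cycle_space V (mod_edges V E) (mod_src src) (mod_tgt tgt)"
  have finI: "finite I" and CS: "cycle_space V E src tgt = int_span c I"
    and indep: "int_independent c I"
    using C unfolding int_basis_def by blast+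
  note eval = lincomb_modified_family[OF finI fin(1)]
  note iff = modified_cycle_space_iff[OF fin(2), where V = V and src = src and tgt = tgt]
  have "?C \<subseteq> int_span ?F (I <+> V)"
  proof
    fix y assume "y \<in> ?C"
    then have "(\<lambda>e. y (Inl e)) \<in> int_span c I" and out: "\<forall>v. v \<notin> V \<longrightarrow> y (Inr v) = 0"
      using iff CS by auto
    then obtain a where a: "(\<lambda>e. y (Inl e)) = lincomb a c I"
      unfolding int_span_def by blast
    have "y = lincomb (case_sum a (\<lambda>v. y (Inr v))) ?F (I <+> V)"
    proof
      fix e' show "y e' = lincomb (case_sum a (\<lambda>v. y (Inr v))) ?F (I <+> V) e'"
        using a out by (cases e') (auto simp: eval case_sum_o_inj fun_eq_iff)
    qed
    then show "y \<in> int_span ?F (I <+> V)"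
      by (metis int_span_lincomb)
  qed
  moreover have "int_span ?F (I <+> V) \<subseteq> ?C"
  proof
    fix y assume "y \<in> int_span ?F (I <+> V)"
    then obtain a where "y = lincomb a ?F (I <+> V)"
      unfolding int_span_def by blast
    then show "y \<in> ?C"
      using iff CS by (simp add: eval int_span_lincomb)
  qed
  moreover have "int_independent ?F (I <+> V)"
    unfolding int_independent_def
  proof (intro allI impI ballI)
    fix a m assume zero: "lincomb a ?F (I <+> V) = (\<lambda>e. 0)" and m: "m \<in> I <+> V"
    have "lincomb (a \<circ> Inl) c I = (\<lambda>e. 0)"
    proof
      fix e show "lincomb (a \<circ> Inl) c I e = 0"
        using fun_cong[OF zero, of "Inl e"] by (simp add: eval)
    qed
    then have "\<forall>i\<in>I. a (Inl i) = 0"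
      using indep unfolding int_independent_def by auto
    moreover have "a (Inr v) = 0" if "v \<in> V" for v
      using fun_cong[OF zero, of "Inr v"] that by (simp add: eval)
    ultimately show "a m = 0"
      using m by auto
  qed
  ultimately show ?thesis
    using finI fin(1) by (simp add: int_basis_def)
qed

lemma cycle_space_basis_adapted_to_index:
  fixes V :: "'v set" and E :: "'e set" and \<tau> :: "'e \<Rightarrow> int^'d"
  assumes "finite V" and "V \<noteq> {}" and "finite E"
    and "\<forall>e\<in>E. src e \<in> V \<and> tgt e \<in> V"
    and "periodic_graph_connected V E src tgt \<tau>"
  shows "card V + CARD('d) \<le> card E + 1 \<and>
    (\<exists>x k. int_basis (cycle_space V E src tgt) (case_sum x k) (UNIV <+> {..<card E + 1 - card V - CARD('d)})
      \<and> (\<forall>i. chain_index E \<tau> (x i) = axis i 1)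
      \<and> int_basis (zero_index_cycles V E src tgt \<tau>) k {..<card E + 1 - card V - CARD('d)})"
proof -
  let ?C = "cycle_space V E src tgt"
  let ?index = "\<lambda>i y. chain_index E \<tau> y $ i"
  obtain v0 where v0: "v0 \<in> V"
    using assms(2) by blast
  obtain b where rank: "card V \<le> card E + 1" and B: "int_basis ?C b {..<card E + 1 - card V}"
    using cycle_space_int_basis[OF assms(1,3,4) v0 assms(5)] by blast
  have "\<forall>i. \<exists>y\<in>?C. chain_index E \<tau> y = axis i 1"
    using exists_cycle_with_index[OF assms(3) v0 assms(5)] by blast
  then obtain x where x: "\<And>i. x i \<in> ?C" "\<And>i. chain_index E \<tau> (x i) = axis i 1"
    by metis
  have dual: "?index i' (x i) = (if i' = i then 1 else 0)" for i i'
    by (simp add: x axis_def)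
  have sections: "\<exists>y\<in>?C. \<forall>i'\<in>UNIV. ?index i' y = (if i' = i then 1 else 0)" for i
    using x(1) dual by blast
  have zero_index: "zero_index_cycles V E src tgt \<tau> = {y \<in> ?C. \<forall>i\<in>UNIV. ?index i y = 0}"
    by (simp add: zero_index_cycles_def vec_eq_iff)
  have "CARD('d) \<le> card {..<card E + 1 - card V} \<and> (\<exists>k. int_basis (zero_index_cycles V E src tgt \<tau>) k
      {..<card {..<card E + 1 - card V} - CARD('d)})"
    unfolding zero_index
    by (rule int_basis_kernel[OF B]) (use additive_functional_chain_index sections in auto)
  then obtain k where le: "CARD('d) \<le> card E + 1 - card V"
    and K: "int_basis (zero_index_cycles V E src tgt \<tau>) k {..<card E + 1 - card V - CARD('d)}"
    by auto
  have "int_basis ?C (case_sum x k) (UNIV <+> {..<card E + 1 - card V - CARD('d)})"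
    by (rule int_basis_split[OF B _ _ _ _ K[unfolded zero_index]])
      (simp_all add: additive_functional_chain_index x(1) dual)
  then show ?thesis
    using rank le x(2) K by auto
qed

theorem lemma3p6:
  fixes V :: "'v set" and E :: "'e set" and src tgt :: "'e \<Rightarrow> 'v"
    and \<tau> :: "'e \<Rightarrow> int^'d"
  assumes "finite V" and "V \<noteq> {}" and "finite E"
    and "\<forall>e\<in>E. src e \<in> V \<and> tgt e \<in> V"
    and "periodic_graph_connected V E src tgt \<tau>"
  shows "int CARD('d) \<le> betti V E \<and>
    (\<exists>c :: ('d + nat) \<Rightarrow> 'e \<Rightarrow> int.
       Z_basis (cycle_space V E src tgt) c (UNIV <+> {..<nat (betti V E - int CARD('d))})
     \<and> (\<forall>i. chain_index E \<tau> (c (Inl i)) = axis i 1)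
     \<and> Z_basis (zero_index_cycles V E src tgt \<tau>) (\<lambda>j. c (Inr j)) {..<nat (betti V E - int CARD('d))}
     \<and> Z_basis (cycle_space V (mod_edges V E) (mod_src src) (mod_tgt tgt))
         (\<lambda>k. case k of Inl j \<Rightarrow> lift_chain (c j) | Inr x \<Rightarrow> loop_chain x)
         ((UNIV <+> {..<nat (betti V E - int CARD('d))}) <+> V))"
proof -
  obtain x k where le: "card V + CARD('d) \<le> card E + 1"
    and C: "int_basis (cycle_space V E src tgt) (case_sum x k) (UNIV <+> {..<card E + 1 - card V - CARD('d)})"
    and index: "\<forall>i. chain_index E \<tau> (x i) = axis i 1"
    and C0: "int_basis (zero_index_cycles V E src tgt \<tau>) k {..<card E + 1 - card V - CARD('d)}"
    using cycle_space_basis_adapted_to_index[OF assms] by blast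
  have rank: "nat (betti V E - int CARD('d)) = card E + 1 - card V - CARD('d)"
    using le by (simp add: betti_def)
  show ?thesis
    unfolding rank
  proof (intro conjI exI[of _ "case_sum x k"])
    show "int CARD('d) \<le> betti V E"
      using le by (simp add: betti_def)
  qed (use index C C0 modified_cycle_space_int_basis[OF assms(1,3) C] in \<open>simp_all add: int_basis_imp_Z_basis\<close>)
qed

end
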